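(* Let $R:\mathcal X\times\mathcal X\to\mathcal X\times\mathcal X$ be a pentagon map. Then for every $n>1$, $i,l\in\{1,\dots,n\}$ and $k\in\{1,\dots,n-l+1\}$, the map ${}^{(n)}T^{i,k,l}:\mathcal X^n\times\mathcal X^n\to\mathcal X^n\times\mathcal X^n$ is a pentagon map, i.e. $$T_{23}\circ T_{12}=T_{12}\circ T_{13}\circ T_{23}$$ as maps on $\mathcal X^{3n}$.
   Context: Pentagon map: for a set $Y$ and $S:Y\times Y\to Y\times Y$, with $S_{12}=S\times\mathrm{id}_Y$, $S_{23}=\mathrm{id}_Y\times S$, $S_{13}(y_1,y_2,y_3)=(p,y_2,q)$ where $(p,q)=S(y_1,y_3)$, one requires $S_{12}\circ S_{13}\circ S_{23}=S_{23}\circ S_{12}$ (rightmost applied first). For an integer $m$ and $b\in\{1,2,3\}$ let $[m]_b$ be the unique element of $\{(b-1)n+1,\dots,bn\}$ congruent to $m$ mod $n$. For positions $p\neq q$ of $\mathcal X^N$, $R_{p,q}$ acts as $R$ on components $(p,q)$ and identically elsewhere; $\circ_{j=1}^k f^j:=f^1\circ\cdots\circ f^k$. On $\mathcal X^{2n}$: ${}^{(n)}t^{i,k,m}=\circ_{j=1}^{k}R_{[i+k+m-1]_1,[i+n+j-1]_2}$ and ${}^{(n)}T^{i,k,l}={}^{(n)}t^{i,k,0}\circ\cdots\circ{}^{(n)}t^{i,k,l-1}$. On $\mathcal X^{3n}$: $t^{m}_{12}=\circ_{j=1}^{k}R_{[i+k+m-1]_1,[i+n+j-1]_2}$, $t^{m}_{13}=\circ_{j=1}^{k}R_{[i+k+m-1]_1,[i+2n+j-1]_3}$,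 $t^{m}_{23}=\circ_{j=1}^{k}R_{[i+n+k+m-1]_2,[i+2n+j-1]_3}$, and $T_{st}=t^{0}_{st}\circ\cdots\circ t^{l-1}_{st}$; these coincide with $({}^{(n)}T^{i,k,l})_{12},({}^{(n)}T^{i,k,l})_{13},({}^{(n)}T^{i,k,l})_{23}$ in the sense of the pentagon-map definition with $Y=\mathcal X^n$. *)

theory Defs
  imports Main
begin

definition S12 :: "('b \<times> 'b \<Rightarrow> 'b \<times> 'b) \<Rightarrow> 'b \<times> 'b \<times> 'b \<Rightarrow> 'b \<times> 'b \<times> 'b" where
  "S12 S y = (case y of (y1, y2, y3) \<Rightarrow> (case S (y1, y2) of (p, q) \<Rightarrow> (p, q, y3)))"

definition S23 :: "('b \<times> 'b \<Rightarrow> 'b \<times> 'b) \<Rightarrow> 'b \<times> 'b \<times> 'b \<Rightarrow> 'b \<times> 'b \<times> 'b" where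
  "S23 S y = (case y of (y1, y2, y3) \<Rightarrow> (case S (y2, y3) of (p, q) \<Rightarrow> (y1, p, q)))"

definition S13 :: "('b \<times> 'b \<Rightarrow> 'b \<times> 'b) \<Rightarrow> 'b \<times> 'b \<times> 'b \<Rightarrow> 'b \<times> 'b \<times> 'b" where
  "S13 S y = (case y of (y1, y2, y3) \<Rightarrow> (case S (y1, y3) of (p, q) \<Rightarrow> (p, y2, q)))"

definition pentagon_map :: "('b \<times> 'b \<Rightarrow> 'b \<times> 'b) \<Rightarrow> bool" where
  "pentagon_map S \<longleftrightarrow> S12 S \<circ> S13 S \<circ> S23 S = S23 S \<circ> S12 S"

text \<open>Elements of X^N are modelled as functions nat => 'a, position p (1 <= p <= N)
  being the p-th component; other values are never touched.\<close>

text \<open>[m]_b: the unique element of {(b-1)n+1,...,bn} congruent to m mod n.\<close>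
definition brk :: "nat \<Rightarrow> nat \<Rightarrow> int \<Rightarrow> nat" where
  "brk n b m = nat ((int b - 1) * int n + (m - 1) mod int n + 1)"

definition Rpq :: "('a \<times> 'a \<Rightarrow> 'a \<times> 'a) \<Rightarrow> nat \<Rightarrow> nat \<Rightarrow> (nat \<Rightarrow> 'a) \<Rightarrow> (nat \<Rightarrow> 'a)" where
  "Rpq R p q x = (case R (x p, x q) of (a, b) \<Rightarrow> x(p := a, q := b))"

definition comp_seq :: "(nat \<Rightarrow> 'c \<Rightarrow> 'c) \<Rightarrow> nat \<Rightarrow> nat \<Rightarrow> 'c \<Rightarrow> 'c" where
  "comp_seq f a b = foldr (\<circ>) (map f [a..<b+1]) id"
  (* composition f a o f (a+1) o ... o f b *)

text \<open>t^m_{st} on X^{3n}, with s,t in {1,2,3}: block s gives the shift (s-1)n in the first index.\<close>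
definition tt :: "('a \<times> 'a \<Rightarrow> 'a \<times> 'a) \<Rightarrow> nat \<Rightarrow> nat \<Rightarrow> nat \<Rightarrow> nat \<Rightarrow> nat \<Rightarrow> nat \<Rightarrow>
    (nat \<Rightarrow> 'a) \<Rightarrow> (nat \<Rightarrow> 'a)" where
  "tt R n i k s t m = comp_seq (\<lambda>j. Rpq R
      (brk n s (int i + int (s - 1) * int n + int k + int m - 1))
      (brk n t (int i + int (t - 1) * int n + int j - 1))) 1 k"

definition TT :: "('a \<times> 'a \<Rightarrow> 'a \<times> 'a) \<Rightarrow> nat \<Rightarrow> nat \<Rightarrow> nat \<Rightarrow> nat \<Rightarrow> nat \<Rightarrow> nat \<Rightarrow>
    (nat \<Rightarrow> 'a) \<Rightarrow> (nat \<Rightarrow> 'a)" where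
  "TT R n i k l s t = comp_seq (tt R n i k s t) 0 (l - 1)"

end

theory Submission imports Defs begin

(* Each T_st is a product of the elementary maps R_{p,q} over a grid of positions: T_12 over
   U x V, T_13 over U x Z and T_23 over W x Z, where U and Z are runs of consecutive positions
   (mod n) in blocks 1 and 3, and V (length k) and W (length l) are runs in block 2 sharing
   exactly one position c, the last of V and the first of W; k + l - 1 <= n keeps V and W
   jointly repetition-free. Factors with disjoint supports commute, so after splitting off c
   the identity reduces to the pentagon relation R_{c,z} R_{u,c} = R_{u,c} R_{u,z} R_{c,z},
   pushed through a row and then a column by induction. *)

definition comp_list :: "('c \<Rightarrow> 'c) list \<Rightarrow> 'c \<Rightarrow> 'c" where
  "comp_list fs = foldr (\<circ>) fs id"

lemma comp_list_Nil [simp]: "comp_list [] = id"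
  by (simp add: comp_list_def)

lemma comp_list_Cons [simp]: "comp_list (f # fs) = f \<circ> comp_list fs"
  by (simp add: comp_list_def)

lemma comp_list_append [simp]: "comp_list (fs @ gs) = comp_list fs \<circ> comp_list gs"
  by (induction fs) (simp_all add: comp_assoc)

lemma comp_list_concat: "comp_list (concat fss) = comp_list (map comp_list fss)"
  by (induction fss) simp_all

lemma comp_list_commute:
  assumes "\<And>g. g \<in> set gs \<Longrightarrow> F \<circ> g = g \<circ> F"
  shows "F \<circ> comp_list gs = comp_list gs \<circ> F"
  using assms
proof (induction gs)
  case (Cons g gs)
  have "F \<circ> g = g \<circ> F"
    by (rule Cons.prems) simp
  moreover have "F \<circ> comp_list gs = comp_list gs \<circ> F"
    by (rule Cons.IH, rule Cons.prems) simp
  ultimately show ?case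
    by (metis comp_assoc comp_list_Cons)
qed simp

lemma comp_left_commute: "A \<circ> B = B \<circ> A \<Longrightarrow> A \<circ> (B \<circ> C) = B \<circ> (A \<circ> C)"
  by (metis comp_assoc)

lemma Rpq_commute:
  assumes "{p, q} \<inter> {p', q'} = {}"
  shows "Rpq R p q \<circ> Rpq R p' q' = Rpq R p' q' \<circ> Rpq R p q"
  using assms by (auto simp: fun_eq_iff Rpq_def split: prod.splits)

lemma Rpq_pentagon:
  assumes "pentagon_map R" "x \<noteq> y" "y \<noteq> z" "x \<noteq> z"
  shows "Rpq R y z \<circ> Rpq R x y = Rpq R x y \<circ> (Rpq R x z \<circ> Rpq R y z)"
proof
  fix s
  have "(S12 R \<circ> S13 R \<circ> S23 R) (s x, s y, s z) = (S23 R \<circ> S12 R) (s x, s y, s z)"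
    using assms(1) unfolding pentagon_map_def by simp
  then show "(Rpq R y z \<circ> Rpq R x y) s = (Rpq R x y \<circ> (Rpq R x z \<circ> Rpq R y z)) s"
    using assms(2-4)
    by (auto simp: Rpq_def S12_def S13_def S23_def fun_eq_iff split: prod.splits)
qed

definition Rgrid :: "('a \<times> 'a \<Rightarrow> 'a \<times> 'a) \<Rightarrow> nat list \<Rightarrow> nat list \<Rightarrow> (nat \<Rightarrow> 'a) \<Rightarrow> nat \<Rightarrow> 'a" where
  "Rgrid R P Q = comp_list [Rpq R p q. p \<leftarrow> P, q \<leftarrow> Q]"

lemma Rgrid_Nil_left [simp]: "Rgrid R [] Q = id"
  by (simp add: Rgrid_def)

lemma Rgrid_Nil_right [simp]: "Rgrid R P [] = id"
  by (induction P) (simp_all add: Rgrid_def)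

lemma Rgrid_singleton: "Rgrid R [p] [q] = Rpq R p q"
  by (simp add: Rgrid_def)

lemma Rgrid_Cons_left: "Rgrid R (p # P) Q = Rgrid R [p] Q \<circ> Rgrid R P Q"
  by (simp add: Rgrid_def)

lemma Rgrid_row_Cons: "Rgrid R [p] (q # Q) = Rpq R p q \<circ> Rgrid R [p] Q"
  by (simp add: Rgrid_def)

lemma Rgrid_row_append: "Rgrid R [p] (Q1 @ Q2) = Rgrid R [p] Q1 \<circ> Rgrid R [p] Q2"
  by (simp add: Rgrid_def)

lemma Rgrid_commute:
  assumes "(set P \<union> set Q) \<inter> (set P' \<union> set Q') = {}"
  shows "Rgrid R P Q \<circ> Rgrid R P' Q' = Rgrid R P' Q' \<circ> Rgrid R P Q"
proof -
  have "Rgrid R P Q \<circ> g = g \<circ> Rgrid R P Q" if "g \<in> set [Rpq R p q. p \<leftarrow> P', q \<leftarrow> Q']" for g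
    unfolding Rgrid_def
    by (rule comp_list_commute[symmetric]) (use assms that in \<open>auto intro!: Rpq_commute\<close>)
  then show ?thesis
    unfolding Rgrid_def[of R P' Q'] by (rule comp_list_commute)
qed

lemma Rgrid_append_right:
  assumes "distinct P" "set P \<inter> (set Q1 \<union> set Q2) = {}" "set Q1 \<inter> set Q2 = {}"
  shows "Rgrid R P (Q1 @ Q2) = Rgrid R P Q1 \<circ> Rgrid R P Q2"
  using assms
proof (induction P)
  case (Cons p P)
  have IH: "Rgrid R P (Q1 @ Q2) = Rgrid R P Q1 \<circ> Rgrid R P Q2"
    by (rule Cons.IH) (use Cons.prems in auto)
  have commute: "Rgrid R [p] Q2 \<circ> Rgrid R P Q1 = Rgrid R P Q1 \<circ> Rgrid R [p] Q2"
    by (rule Rgrid_commute) (use Cons.prems in auto)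
  have "Rgrid R (p # P) (Q1 @ Q2) = Rgrid R [p] Q1 \<circ> (Rgrid R [p] Q2 \<circ> (Rgrid R P Q1 \<circ> Rgrid R P Q2))"
    by (simp add: Rgrid_Cons_left[of R p P] Rgrid_row_append IH comp_assoc)
  also have "\<dots> = Rgrid R [p] Q1 \<circ> (Rgrid R P Q1 \<circ> (Rgrid R [p] Q2 \<circ> Rgrid R P Q2))"
    by (simp only: comp_left_commute[OF commute])
  also have "\<dots> = Rgrid R (p # P) Q1 \<circ> Rgrid R (p # P) Q2"
    by (simp add: Rgrid_Cons_left[of R p P] comp_assoc)
  finally show ?case .
qed simp

lemma Rgrid_pentagon_row:
  assumes "pentagon_map R" "u \<noteq> c" "u \<notin> set Z" "c \<notin> set Z" "distinct Z"
  shows "Rgrid R [c] Z \<circ> Rpq R u c = Rpq R u c \<circ> (Rgrid R [u] Z \<circ> Rgrid R [c] Z)"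
  using assms(3-5)
proof (induction Z)
  case (Cons z Z)
  have IH: "Rgrid R [c] Z \<circ> Rpq R u c = Rpq R u c \<circ> (Rgrid R [u] Z \<circ> Rgrid R [c] Z)"
    by (rule Cons.IH) (use Cons.prems in auto)
  have pentagon: "Rpq R c z \<circ> Rpq R u c = Rpq R u c \<circ> (Rpq R u z \<circ> Rpq R c z)"
    using Rpq_pentagon[OF assms(1), of u c z] Cons.prems assms(2) by simp
  have commute: "Rpq R c z \<circ> Rgrid R [u] Z = Rgrid R [u] Z \<circ> Rpq R c z"
    using Rgrid_commute[of "[c]" "[z]" "[u]" Z R] Cons.prems assms(2)
    by (auto simp: Rgrid_singleton)
  have "Rgrid R [c] (z # Z) \<circ> Rpq R u c = Rpq R c z \<circ> (Rgrid R [c] Z \<circ> Rpq R u c)"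
    by (simp add: Rgrid_row_Cons comp_assoc)
  also have "\<dots> = (Rpq R c z \<circ> Rpq R u c) \<circ> (Rgrid R [u] Z \<circ> Rgrid R [c] Z)"
    by (simp add: IH comp_assoc)
  also have "\<dots> = Rpq R u c \<circ> (Rpq R u z \<circ> (Rpq R c z \<circ> (Rgrid R [u] Z \<circ> Rgrid R [c] Z)))"
    by (simp add: pentagon comp_assoc)
  also have "\<dots> = Rpq R u c \<circ> (Rgrid R [u] (z # Z) \<circ> Rgrid R [c] (z # Z))"
    by (simp add: comp_left_commute[OF commute] Rgrid_row_Cons comp_assoc)
  finally show ?case .
qed simp

lemma Rgrid_pentagon_column:
  assumes "pentagon_map R" "distinct U" "distinct Z"
    and "c \<notin> set U" "c \<notin> set Z" "set U \<inter> set Z = {}"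
  shows "Rgrid R [c] Z \<circ> Rgrid R U [c] = Rgrid R U [c] \<circ> (Rgrid R U Z \<circ> Rgrid R [c] Z)"
  using assms(2,4,6)
proof (induction U)
  case (Cons u U)
  have IH: "Rgrid R [c] Z \<circ> Rgrid R U [c] = Rgrid R U [c] \<circ> (Rgrid R U Z \<circ> Rgrid R [c] Z)"
    by (rule Cons.IH) (use Cons.prems in auto)
  have row: "Rgrid R [c] Z \<circ> Rpq R u c = Rpq R u c \<circ> (Rgrid R [u] Z \<circ> Rgrid R [c] Z)"
    by (rule Rgrid_pentagon_row) (use assms Cons.prems in auto)
  have commute: "Rgrid R [u] Z \<circ> Rgrid R U [c] = Rgrid R U [c] \<circ> Rgrid R [u] Z"
    by (rule Rgrid_commute) (use Cons.prems assms(5) in auto)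
  have "Rgrid R [c] Z \<circ> Rgrid R (u # U) [c] = (Rgrid R [c] Z \<circ> Rpq R u c) \<circ> Rgrid R U [c]"
    by (simp add: Rgrid_Cons_left[of R u U] Rgrid_singleton comp_assoc)
  also have "\<dots> = Rpq R u c \<circ> (Rgrid R [u] Z \<circ> (Rgrid R U [c] \<circ> (Rgrid R U Z \<circ> Rgrid R [c] Z)))"
    by (simp add: row IH comp_assoc)
  also have "\<dots> = Rpq R u c \<circ> (Rgrid R U [c] \<circ> (Rgrid R [u] Z \<circ> (Rgrid R U Z \<circ> Rgrid R [c] Z)))"
    by (simp add: comp_left_commute[OF commute])
  also have "\<dots> = Rgrid R (u # U) [c] \<circ> (Rgrid R (u # U) Z \<circ> Rgrid R [c] Z)"
    by (simp add: Rgrid_Cons_left[of R u U] Rgrid_singleton comp_assoc)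
  finally show ?case .
qed simp

lemma Rgrid_pentagon:
  assumes "pentagon_map R" "distinct U" "distinct Z" "distinct (V' @ c # W')"
    and "set U \<inter> set (V' @ c # W') = {}" "set U \<inter> set Z = {}" "set Z \<inter> set (V' @ c # W') = {}"
  shows "Rgrid R (c # W') Z \<circ> Rgrid R U (V' @ [c])
    = Rgrid R U (V' @ [c]) \<circ> Rgrid R U Z \<circ> Rgrid R (c # W') Z"
proof -
  have V_split: "Rgrid R U (V' @ [c]) = Rgrid R U V' \<circ> Rgrid R U [c]"
    by (rule Rgrid_append_right) (use assms in auto)
  have W'_commute: "Rgrid R W' Z \<circ> Rgrid R U (V' @ [c]) = Rgrid R U (V' @ [c]) \<circ> Rgrid R W' Z"
    by (rule Rgrid_commute) (use assms in auto)
  have V'_commute: "Rgrid R [c] Z \<circ> Rgrid R U V' = Rgrid R U V' \<circ> Rgrid R [c] Z"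
    by (rule Rgrid_commute) (use assms in auto)
  have column: "Rgrid R [c] Z \<circ> Rgrid R U [c] = Rgrid R U [c] \<circ> (Rgrid R U Z \<circ> Rgrid R [c] Z)"
    by (rule Rgrid_pentagon_column) (use assms in auto)
  have "Rgrid R (c # W') Z \<circ> Rgrid R U (V' @ [c])
      = Rgrid R [c] Z \<circ> (Rgrid R U V' \<circ> (Rgrid R U [c] \<circ> Rgrid R W' Z))"
    by (simp add: Rgrid_Cons_left[of R c W'] comp_assoc W'_commute) (simp add: V_split comp_assoc)
  also have "\<dots> = Rgrid R U V' \<circ> ((Rgrid R [c] Z \<circ> Rgrid R U [c]) \<circ> Rgrid R W' Z)"
    by (simp add: comp_left_commute[OF V'_commute] comp_assoc)
  also have "\<dots> = Rgrid R U (V' @ [c]) \<circ> Rgrid R U Z \<circ> Rgrid R (c # W') Z"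
    by (simp add: column V_split Rgrid_Cons_left[of R c W'] comp_assoc)
  finally show ?thesis .
qed

lemma int_brk:
  assumes "0 < n" "1 \<le> b"
  shows "int (brk n b x) = int ((b - 1) * n) + (x - 1) mod int n + 1"
  using assms unfolding brk_def by (simp add: of_nat_diff)

lemma brk_in_block:
  assumes "0 < n" "1 \<le> b"
  shows "(b - 1) * n < brk n b x \<and> brk n b x \<le> b * n"
proof -
  have "0 \<le> (x - 1) mod int n" "(x - 1) mod int n < int n"
    using assms by simp_all
  moreover have "int (b * n) = int ((b - 1) * n) + int n"
    using assms by (simp add: algebra_simps of_nat_diff)
  ultimately show ?thesis
    using int_brk[OF assms, of x] by linarith
qed

lemma brk_eq_imp_dvd:
  assumes "0 < n" "1 \<le> b" "brk n b x = brk n b y"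
  shows "int n dvd x - y"
proof -
  have "(x - 1) mod int n = (y - 1) mod int n"
    using assms(3) int_brk[OF assms(1,2)] by (metis add_right_cancel add_left_cancel)
  then show ?thesis
    by (simp add: mod_eq_dvd_iff)
qed

definition cyclic_run :: "nat \<Rightarrow> nat \<Rightarrow> int \<Rightarrow> nat \<Rightarrow> nat \<Rightarrow> nat list" where
  "cyclic_run n b d a e = map (\<lambda>j. brk n b (d + int j)) [a..<e]"

lemma cyclic_run_distinct:
  assumes "0 < n" "1 \<le> b" "e - a \<le> n"
  shows "distinct (cyclic_run n b d a e)"
  unfolding cyclic_run_def distinct_map
proof (intro conjI distinct_upt inj_onI)
  fix x y assume x: "x \<in> set [a..<e]" and y: "y \<in> set [a..<e]"
    and eq: "brk n b (d + int x) = brk n b (d + int y)"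
  have dvd: "int n dvd int x - int y"
    using brk_eq_imp_dvd[OF assms(1,2) eq] by simp
  have bound: "\<bar>int x - int y\<bar> < int n"
    using x y assms(3) by auto
  show "x = y"
  proof (rule ccontr)
    assume "x \<noteq> y"
    then have "int n \<le> \<bar>int x - int y\<bar>"
      using dvd_imp_le_int[OF _ dvd] by simp
    with bound show False
      by simp
  qed
qed

lemma cyclic_run_in_block:
  assumes "0 < n" "1 \<le> b" "p \<in> set (cyclic_run n b d a e)"
  shows "(b - 1) * n < p \<and> p \<le> b * n"
  using assms brk_in_block unfolding cyclic_run_def by auto

lemma cyclic_runs_disjoint:
  assumes "0 < n" "1 \<le> b" "1 \<le> b'" "b \<noteq> b'"
  shows "set (cyclic_run n b d a e) \<inter> set (cyclic_run n b' d' a' e') = {}"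
proof -
  have "p \<noteq> p'" if "p \<in> set (cyclic_run n b d a e)" "p' \<in> set (cyclic_run n b' d' a' e')"
    for p p'
  proof -
    have below: "x * n \<le> (y - 1) * n" if "x < y" for x y :: nat
      using that by (intro mult_le_mono1) simp
    have "b * n \<le> (b' - 1) * n \<or> b' * n \<le> (b - 1) * n"
      using assms(4) below[of b b'] below[of b' b] by linarith
    then show ?thesis
      using cyclic_run_in_block[OF assms(1,2) that(1)] cyclic_run_in_block[OF assms(1,3) that(2)]
      by linarith
  qed
  then show ?thesis by blast
qed

lemma cyclic_run_append:
  assumes "a \<le> m" "m \<le> e"
  shows "cyclic_run n b d a e = cyclic_run n b d a m @ cyclic_run n b d m e"
  using assms upt_add_eq_append[of a m "e - m"] unfolding cyclic_run_def by simp

lemma cyclic_run_singleton: "cyclic_run n b d m (Suc m) = [brk n b (d + int m)]"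
  by (simp add: cyclic_run_def)

lemma Rgrid_eq_comp_list_rows: "Rgrid R P Q = comp_list (map (\<lambda>p. comp_list (map (Rpq R p) Q)) P)"
  by (simp add: Rgrid_def comp_list_concat o_def)

lemma TT_eq_Rgrid:
  assumes "1 \<le> l"
  shows "TT R n i k l s t = Rgrid R
      (cyclic_run n s (int i + int (s - 1) * int n - 1) k (k + l))
      (cyclic_run n t (int i + int (t - 1) * int n - 1) 1 (k + 1))"
proof -
  have shift: "map f [k..<k + l] = map (\<lambda>m. f (k + m)) [0..<l]" for f :: "nat \<Rightarrow> nat"
    by (induction l) auto
  show ?thesis
    using assms
    unfolding TT_def tt_def comp_seq_def Rgrid_eq_comp_list_rows cyclic_run_def comp_list_def shift
    by (simp del: upt_Suc add: algebra_simps comp_def)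
qed

lemma cyclic_runs_pentagon:
  fixes d1 d2 d3 :: int
  assumes "pentagon_map R" "0 < n" "1 \<le> k" "1 \<le> l" "k + l - 1 \<le> n"
  defines "U \<equiv> cyclic_run n 1 d1 k (k + l)" and "Z \<equiv> cyclic_run n 3 d3 1 (k + 1)"
    and "V \<equiv> cyclic_run n 2 d2 1 (k + 1)" and "W \<equiv> cyclic_run n 2 d2 k (k + l)"
  shows "Rgrid R W Z \<circ> Rgrid R U V = Rgrid R U V \<circ> Rgrid R U Z \<circ> Rgrid R W Z"
proof -
  define c where "c = brk n 2 (d2 + int k)"
  define V' where "V' = cyclic_run n 2 d2 1 k"
  define W' where "W' = cyclic_run n 2 d2 (k + 1) (k + l)"
  have V: "V = V' @ [c]"
    using cyclic_run_append[of 1 k "k + 1"] assms(3)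
    by (simp add: V_def V'_def c_def cyclic_run_singleton del: upt_Suc)
  have W: "W = c # W'"
    using cyclic_run_append[of k "k + 1" "k + l"] assms(4)
    by (simp add: W_def W'_def c_def cyclic_run_singleton)
  have VW: "V' @ c # W' = cyclic_run n 2 d2 1 (k + l)"
    using cyclic_run_append[of 1 k "k + l"] W assms(3) by (simp add: W_def V'_def)
  show ?thesis
    unfolding V W
  proof (rule Rgrid_pentagon[OF assms(1)])
    show "distinct U" "distinct Z" "distinct (V' @ c # W')"
      unfolding U_def Z_def VW using assms(3-5) by (auto intro: cyclic_run_distinct[OF assms(2)])
    show "set U \<inter> set (V' @ c # W') = {}" "set U \<inter> set Z = {}" "set Z \<inter> set (V' @ c # W') = {}"
      unfolding U_def Z_def VW by (simp_all add: cyclic_runs_disjoint[OF assms(2)])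
  qed
qed

theorem mainTheorem11:
  fixes R :: "'a \<times> 'a \<Rightarrow> 'a \<times> 'a" and n i k l :: nat
  assumes "pentagon_map R"
    and "n > 1"
    and "1 \<le> i" "i \<le> n" and "1 \<le> l" "l \<le> n"
    and "1 \<le> k" "k \<le> n - l + 1"
  shows "TT R n i k l 2 3 \<circ> TT R n i k l 1 2
       = TT R n i k l 1 2 \<circ> TT R n i k l 1 3 \<circ> TT R n i k l 2 3"
proof -
  have "k + l - 1 \<le> n"
    using assms(6,8) by linarith
  then show ?thesis
    using cyclic_runs_pentagon[OF assms(1) _ assms(7,5)] assms(2)
    by (simp add: TT_eq_Rgrid[OF assms(5)])
qed

end
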